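(* Assume the setting in the context (in particular the Causal Faithfulness Condition). Let $x_i,x_j,x_k,x_u\in X$ be distinct. Suppose that $x_k$ is a parent of $x_i$ or a parent of $x_j$, that $x_u$ is an ancestor of $x_i$, and that $x_u\perp\!\!\!\perp x_k\mid x_i$. Then $x_k$ is a parent of $x_j$.
   Context: Model: $X$ is a finite set of observed random variables and $U$ a finite set of unobserved random variables; $V=X\cup U$ and $G=(V,E)$ is a DAG on $V$. Each $v_i\in V$ satisfies $v_i=\sum_{x_j\in \mathrm{pa}(v_i)\cap X} f^{(i)}_j(x_j)+\sum_{u_k\in\mathrm{pa}(v_i)\cap U} f^{(i)}_k(u_k)+n_i$, where the $f$'s are nonlinear functions and the external noises $n_i$ are jointly independent. "Parent", "ancestor", "path", "d-separation" refer to $G$. Causal Faithfulness Condition (CFC): any conditional independence among variables of $V$ that is not entailed by d-separation in $G$ does not hold. $\perp\!\!\!\perp$ denotes statistical independence. *)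

theory Defs
  imports "HOL-Probability.Probability"
begin

definition parent :: "('v \<times> 'v) set \<Rightarrow> 'v \<Rightarrow> 'v \<Rightarrow> bool" where
  "parent E a b \<longleftrightarrow> (a, b) \<in> E"

definition ancestor :: "('v \<times> 'v) set \<Rightarrow> 'v \<Rightarrow> 'v \<Rightarrow> bool" where
  "ancestor E a b \<longleftrightarrow> (a, b) \<in> E\<^sup>+"

definition is_DAG :: "'v set \<Rightarrow> ('v \<times> 'v) set \<Rightarrow> bool" where
  "is_DAG V E \<longleftrightarrow> finite V \<and> E \<subseteq> V \<times> V \<and> acyclic E"

definition is_path :: "('v \<times> 'v) set \<Rightarrow> 'v list \<Rightarrow> bool" where
  "is_path E p \<longleftrightarrow> p \<noteq> [] \<and> distinct p \<and>
     (\<forall>i. Suc i < length p \<longrightarrow> (p ! i, p ! Suc i) \<in> E \<or> (p ! Suc i, p ! i) \<in> E)"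

definition collider :: "('v \<times> 'v) set \<Rightarrow> 'v list \<Rightarrow> nat \<Rightarrow> bool" where
  "collider E p i \<longleftrightarrow> 0 < i \<and> Suc i < length p \<and>
     (p ! (i - 1), p ! i) \<in> E \<and> (p ! Suc i, p ! i) \<in> E"

definition d_connecting :: "('v \<times> 'v) set \<Rightarrow> 'v list \<Rightarrow> 'v set \<Rightarrow> bool" where
  "d_connecting E p Z \<longleftrightarrow> is_path E p \<and>
     (\<forall>i. 0 < i \<and> Suc i < length p \<longrightarrow>
        (collider E p i \<longrightarrow> (\<exists>z\<in>Z. (p ! i, z) \<in> E\<^sup>*)) \<and>
        (\<not> collider E p i \<longrightarrow> p ! i \<notin> Z))"

definition d_separated :: "('v \<times> 'v) set \<Rightarrow> 'v set \<Rightarrow> 'v set \<Rightarrow> 'v set \<Rightarrow> bool" where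
  "d_separated E A B Z \<longleftrightarrow>
     (\<forall>p. d_connecting E p Z \<longrightarrow> \<not> (hd p \<in> A \<and> last p \<in> B))"

definition gen_sigma :: "'a measure \<Rightarrow> ('v \<Rightarrow> 'a \<Rightarrow> real) \<Rightarrow> 'v set \<Rightarrow> 'a measure" where
  "gen_sigma M val S =
     vimage_algebra (space M) (\<lambda>\<omega>. restrict (\<lambda>v. val v \<omega>) S) (PiM S (\<lambda>_. borel))"

definition cond_indep_sa :: "'a measure \<Rightarrow> 'a measure \<Rightarrow> 'a measure \<Rightarrow> 'a measure \<Rightarrow> bool" where
  "cond_indep_sa M F G H \<longleftrightarrow>
     (\<forall>A\<in>sets F. \<forall>B\<in>sets G. AE \<omega> in M.
        real_cond_exp M H (indicator (A \<inter> B)) \<omega> =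
        real_cond_exp M H (indicator A) \<omega> * real_cond_exp M H (indicator B) \<omega>)"

definition cond_indep :: "'a measure \<Rightarrow> ('v \<Rightarrow> 'a \<Rightarrow> real) \<Rightarrow> 'v set \<Rightarrow> 'v set \<Rightarrow> 'v set \<Rightarrow> bool" where
  "cond_indep M val A B C \<longleftrightarrow>
     cond_indep_sa M (gen_sigma M val A) (gen_sigma M val B) (gen_sigma M val C)"

definition nonlinear :: "(real \<Rightarrow> real) \<Rightarrow> bool" where
  "nonlinear g \<longleftrightarrow> \<not> (\<exists>a b. \<forall>x. g x = a * x + b)"

(* additive nonlinear SEM on DAG (V,E), V = X \<union> U with X observed, U unobserved;
   f i j is the function applied to parent j in the equation of v_i *)
definition additive_SEM ::
  "'a measure \<Rightarrow> 'v set \<Rightarrow> 'v set \<Rightarrow> ('v \<times> 'v) set \<Rightarrow> ('v \<Rightarrow> 'a \<Rightarrow> real)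
     \<Rightarrow> ('v \<Rightarrow> 'v \<Rightarrow> real \<Rightarrow> real) \<Rightarrow> ('v \<Rightarrow> 'a \<Rightarrow> real) \<Rightarrow> bool" where
  "additive_SEM M X U E val f noise \<longleftrightarrow>
     prob_space M \<and> finite X \<and> finite U \<and> X \<inter> U = {} \<and> is_DAG (X \<union> U) E \<and>
     (\<forall>v\<in>X \<union> U. val v \<in> borel_measurable M \<and> noise v \<in> borel_measurable M) \<and>
     prob_space.indep_vars M (\<lambda>_. borel) noise (X \<union> U) \<and>
     (\<forall>i\<in>X \<union> U. \<forall>j. (j, i) \<in> E \<longrightarrow> f i j \<in> borel_measurable borel \<and> nonlinear (f i j)) \<and>
     (\<forall>i\<in>X \<union> U. \<forall>\<omega>\<in>space M.
        val i \<omega> = (\<Sum>j\<in>{j\<in>X. (j, i) \<in> E}. f i j (val j \<omega>))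
                 + (\<Sum>k\<in>{k\<in>U. (k, i) \<in> E}. f i k (val k \<omega>)) + noise i \<omega>)"

definition CFC :: "'a measure \<Rightarrow> 'v set \<Rightarrow> ('v \<times> 'v) set \<Rightarrow> ('v \<Rightarrow> 'a \<Rightarrow> real) \<Rightarrow> bool" where
  "CFC M V E val \<longleftrightarrow>
     (\<forall>A B C. A \<subseteq> V \<longrightarrow> B \<subseteq> V \<longrightarrow> C \<subseteq> V \<longrightarrow>
        A \<inter> B = {} \<longrightarrow> A \<inter> C = {} \<longrightarrow> B \<inter> C = {} \<longrightarrow>
        cond_indep M val A B C \<longrightarrow> d_separated E A B C)"

end

(* Suppose xk is not a parent of xj, so xk -> xi. Take a directed path from xu to xi.
   If xk lies on it, the segment from xu to xk is a directed path without colliders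
   that avoids xi; otherwise appending the edge xi <- xk gives a path whose only
   collider is xi itself. Either way xu and xk are d-connected given {xi}, so by
   faithfulness they cannot be conditionally independent given xi. *)

theory Submission
  imports Defs
begin

abbreviation directed_walk :: "('v \<times> 'v) set \<Rightarrow> 'v list \<Rightarrow> bool" where
  "directed_walk E \<equiv> successively (\<lambda>x y. (x, y) \<in> E)"

lemma trancl_imp_directed_walk:
  assumes "(a, b) \<in> E\<^sup>+"
  obtains ps where "directed_walk E (a # ps @ [b])"
  using assms
proof (induction arbitrary: thesis rule: trancl_induct)
  case (base b)
  then show ?case using base.prems[of "[]"] by simp
next
  case (step b c)
  then obtain ps where "directed_walk E (a # ps @ [b])" by blast
  with step.hyps(2) have "directed_walk E ((a # ps @ [b]) @ [c])"
    unfolding successively_append_iff by simp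
  then show ?case using step.prems[of "ps @ [b]"] by simp
qed

lemma directed_walk_trancl:
  assumes "directed_walk E (a # ps @ [b])"
  shows "(a, b) \<in> E\<^sup>+"
  using assms
proof (induction ps arbitrary: a)
  case Nil
  then show ?case by auto
next
  case (Cons x ps)
  then have "(a, x) \<in> E" and "directed_walk E (x # ps @ [b])" by simp_all
  then show ?case using Cons.IH by (blast intro: trancl_into_trancl2)
qed

lemma directed_walk_distinct:
  assumes "acyclic E" and "directed_walk E p"
  shows "distinct p"
proof (rule ccontr)
  assume "\<not> distinct p"
  then obtain xs a ys zs where p: "p = xs @ a # ys @ a # zs"
    by (metis append_Cons append_Nil not_distinct_decomp)
  with assms(2) have "directed_walk E (xs @ (a # ys @ [a]) @ zs)" by simp
  then have "directed_walk E (a # ys @ [a])"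
    by (simp only: successively_append_iff)
  then have "(a, a) \<in> E\<^sup>+" by (rule directed_walk_trancl)
  with assms(1) show False unfolding acyclic_def by blast
qed

lemma directed_walk_not_collider:
  assumes "acyclic E" and "directed_walk E p"
  shows "\<not> collider E p i"
proof
  assume "collider E p i"
  then have "(p ! Suc i, p ! i) \<in> E" and "Suc i < length p"
    unfolding collider_def by auto
  moreover from assms(2) \<open>Suc i < length p\<close> have "(p ! i, p ! Suc i) \<in> E"
    by (rule successively_nth)
  ultimately have "(p ! i, p ! i) \<in> E\<^sup>+" by (meson trancl.intros)
  with assms(1) show False unfolding acyclic_def by blast
qed

lemma nth_mem_set_tl:
  assumes "0 < i" and "i < length xs"
  shows "xs ! i \<in> set (tl xs)"
proof -
  have "xs ! i = tl xs ! (i - 1)" using assms by (simp add: nth_tl)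
  moreover have "i - 1 < length (tl xs)" using assms by simp
  ultimately show ?thesis by simp
qed

lemma nth_mem_interior:
  assumes "0 < i" and "Suc i < length p"
  shows "p ! i \<in> set (tl (butlast p))"
  using nth_mem_set_tl[of i "butlast p"] assms by (simp add: nth_butlast)

lemma directed_walk_d_connecting:
  assumes "acyclic E" and "directed_walk E p" and "p \<noteq> []"
    and "set (tl (butlast p)) \<inter> Z = {}"
  shows "d_connecting E p Z"
proof -
  have "is_path E p"
    unfolding is_path_def
    using assms(3) directed_walk_distinct[OF assms(1,2)] successively_nth[OF assms(2)] by blast
  moreover have "p ! i \<notin> Z" if "0 < i" "Suc i < length p" for i
    using nth_mem_interior[OF that] assms(4) by blast
  ultimately show ?thesis
    unfolding d_connecting_def using directed_walk_not_collider[OF assms(1,2)] by blast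
qed

lemma directed_walk_collider_d_connecting:
  assumes "acyclic E" and "directed_walk E (ps @ [c])" and "(k, c) \<in> E"
    and "k \<notin> set (ps @ [c])" and "\<exists>z\<in>Z. (c, z) \<in> E\<^sup>*"
    and "set (tl ps) \<inter> Z = {}"
  shows "d_connecting E (ps @ [c, k]) Z"
proof -
  let ?q = "ps @ [c, k]"
  have q_prefix: "?q ! i = (ps @ [c]) ! i" if "i < Suc (length ps)" for i
    using that by (simp add: nth_append)
  have adj: "(?q ! i, ?q ! Suc i) \<in> E" if "i < length ps" for i
    using successively_nth[OF assms(2), of i] that q_prefix[of i] q_prefix[of "Suc i"] by simp
  have "is_path E ?q"
    unfolding is_path_def
  proof (intro conjI allI impI)
    show "distinct ?q"
      using directed_walk_distinct[OF assms(1,2)] assms(4) by auto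
  next
    fix i assume "Suc i < length ?q"
    then consider "i < length ps" | "i = length ps" by fastforce
    then show "(?q ! i, ?q ! Suc i) \<in> E \<or> (?q ! Suc i, ?q ! i) \<in> E"
      by cases (use adj assms(3) in \<open>auto simp: nth_append\<close>)
  qed simp
  moreover have "(collider E ?q i \<longrightarrow> (\<exists>z\<in>Z. (?q ! i, z) \<in> E\<^sup>*)) \<and>
      (\<not> collider E ?q i \<longrightarrow> ?q ! i \<notin> Z)" if "0 < i" "Suc i < length ?q" for i
  proof (cases "i < length ps")
    case True
    then have "collider E ?q i \<longleftrightarrow> collider E (ps @ [c]) i"
      unfolding collider_def using q_prefix by auto
    then have "\<not> collider E ?q i"
      using directed_walk_not_collider[OF assms(1,2)] by blast
    moreover have "?q ! i \<in> set (tl ps)"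
      using nth_mem_set_tl[OF that(1) True] True by (simp add: nth_append)
    ultimately show ?thesis using assms(6) by blast
  next
    case False
    then have i: "i = length ps" using that by simp
    with that(1) have "collider E ?q i"
      using adj[of "i - 1"] assms(3) unfolding collider_def by (simp add: nth_append)
    then show ?thesis using assms(5) i by simp
  qed
  ultimately show ?thesis unfolding d_connecting_def by blast
qed

theorem corollary2:
  fixes M :: "'a measure" and X U :: "'v set" and E :: "('v \<times> 'v) set"
    and val noise :: "'v \<Rightarrow> 'a \<Rightarrow> real" and f :: "'v \<Rightarrow> 'v \<Rightarrow> real \<Rightarrow> real"
    and xi xj xk xu :: 'v
  assumes "additive_SEM M X U E val f noise"
    and "CFC M (X \<union> U) E val"
    and "xi \<in> X" "xj \<in> X" "xk \<in> X" "xu \<in> X"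
    and "distinct [xi, xj, xk, xu]"
    and "parent E xk xi \<or> parent E xk xj"
    and "ancestor E xu xi"
    and "cond_indep M val {xu} {xk} {xi}"
  shows "parent E xk xj"
proof (rule ccontr)
  assume "\<not> parent E xk xj"
  with assms(8) have ki: "(xk, xi) \<in> E" unfolding parent_def by blast
  from assms(1) have acyc: "acyclic E" unfolding additive_SEM_def is_DAG_def by blast
  from assms(2-7,10) have sep: "d_separated E {xu} {xk} {xi}" unfolding CFC_def by simp
  from assms(9) obtain ps where walk: "directed_walk E (xu # ps @ [xi])"
    unfolding ancestor_def by (rule trancl_imp_directed_walk)
  have "distinct (xu # ps @ [xi])" using directed_walk_distinct[OF acyc walk] .
  then have xi_fresh: "xi \<notin> set (xu # ps)" by auto
  have "\<exists>q. d_connecting E q {xi} \<and> hd q = xu \<and> last q = xk"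
  proof (cases "xk \<in> set ps")
    case True
    \<comment> \<open>The prefix of the walk ending in xk has no colliders and avoids xi.\<close>
    then obtain ys zs where ps: "ps = ys @ xk # zs" by (meson split_list)
    let ?q = "xu # ys @ [xk]"
    from walk have "directed_walk E (?q @ zs @ [xi])" unfolding ps by simp
    then have "directed_walk E ?q" by (simp only: successively_append_iff)
    moreover have "set (tl (butlast ?q)) \<inter> {xi} = {}"
      using xi_fresh unfolding ps by (simp add: butlast_append)
    ultimately have "d_connecting E ?q {xi}"
      by (intro directed_walk_d_connecting[OF acyc]) simp_all
    then show ?thesis by (intro exI[of _ ?q]) simp
  next
    case False
    \<comment> \<open>Then xu -> ... -> xi <- xk is d-connecting: its only collider xi is conditioned on.\<close>
    then have "xk \<notin> set ((xu # ps) @ [xi])" using assms(7) by auto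
    with walk have "d_connecting E ((xu # ps) @ [xi, xk]) {xi}"
      using xi_fresh ki by (intro directed_walk_collider_d_connecting[OF acyc]) auto
    then show ?thesis by (intro exI[of _ "(xu # ps) @ [xi, xk]"]) simp
  qed
  with sep show False unfolding d_separated_def by blast
qed

end
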